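(* For every integer $N\ge1$, $u\in\mathbb{C}$ and $\tau$ with $\operatorname{Im}\tau>0$, $$(-i)^{N+1}e^{-\pi i(N-1)u}q^{\frac{(N-1)^2}{8N}}R\!\left(u;\tfrac\tau N\right)=\sum_{k=0}^{N-1}(-1)^ke^{-2\pi iku}q^{-\frac{k(k-N+1)}{2N}}R\!\left(Nu+k\tau-\tfrac{N-1}{2}\tau+\tfrac{N+1}{2};N\tau\right).$$
   Context: $q=e^{2\pi i\tau}$, $q^c:=e^{2\pi ic\tau}$. $E(x)=2\int_0^xe^{-\pi z^2}dz$. For $w\in\mathbb{C}$ and $\sigma$ with $\operatorname{Im}\sigma>0$, with $t=\operatorname{Im}\sigma$ and $a=\operatorname{Im}w/\operatorname{Im}\sigma$: $R(w;\sigma)=\sum_{\nu\in\mathbb{Z}+1/2}\{\operatorname{sgn}(\nu)-E((\nu+a)\sqrt{2t})\}(-1)^{\nu-1/2}e^{-2\pi i\nu w}e^{-\pi i\nu^2\sigma}$. *)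

theory Defs
  imports "HOL-Analysis.Analysis"
begin

definition Efun :: "real \<Rightarrow> real" where
  "Efun x = 2 * (if 0 \<le> x then integral {0..x} (\<lambda>z. exp (- pi * z\<^sup>2))
                  else - integral {x..0} (\<lambda>z. exp (- pi * z\<^sup>2)))"

definition qpow :: "complex \<Rightarrow> real \<Rightarrow> complex" where
  "qpow \<tau> c = exp (2 * pi * \<i> * of_real c * \<tau>)"

definition Rfun :: "complex \<Rightarrow> complex \<Rightarrow> complex" where
  "Rfun w \<sigma> =
     (let t = Im \<sigma>; a = Im w / Im \<sigma> in
      (\<Sum>\<^sub>\<infinity> n::int.
         (let \<nu> = real_of_int n + 1/2 in
           of_real (sgn \<nu> - Efun ((\<nu> + a) * sqrt (2 * t)))
           * (-1) powi n
           * exp (- 2 * pi * \<i> * of_real \<nu> * w)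
           * exp (- pi * \<i> * of_real (\<nu>\<^sup>2) * \<sigma>))))"

end

theory Submission
  imports Defs "HOL-Probability.Distributions"
begin

text \<open>Write \<open>\<nu> = n + 1/2\<close> for the summation index of \<open>R(u; \<tau>/N)\<close> and split \<open>n\<close> by its residue
  class, \<open>n = N m + k\<close> with \<open>0 \<le> k < N\<close>. Each class is, term by term, the series of
  \<open>R(N u + k \<tau> - (N-1)\<tau>/2 + (N+1)/2; N \<tau>)\<close> in the index \<open>m + 1/2\<close>: the arguments of \<open>E\<close> coincide,
  \<open>sgn (n + 1/2) = sgn (m + 1/2)\<close>, and the exponential factors agree up to \<open>exp (2 \<pi> i N m) = 1\<close>.
  The bound \<open>|sgn x - E x| \<le> exp (- \<pi> x\<^sup>2)\<close> gives Gaussian decay of the terms, so the series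
  converges absolutely and may be regrouped.\<close>

lemma has_bochner_integral_half_gaussian:
  "has_bochner_integral lborel (\<lambda>z::real. indicator {0..} z * exp (- pi * z\<^sup>2)) (1/2)"
proof -
  let ?phi = "\<lambda>x::real. indicator {0..} x *\<^sub>R exp (- x\<^sup>2)"
  have c: "sqrt pi \<noteq> 0" by simp
  have rescale: "(\<lambda>z. ?phi (0 + sqrt pi * z)) = (\<lambda>z. indicator {0..} z * exp (- pi * z\<^sup>2))"
    using pi_gt_zero by (auto simp: fun_eq_iff indicator_def zero_le_mult_iff power_mult_distrib not_le)
  have i: "integrable lborel ?phi" and v: "integral\<^sup>L lborel ?phi = sqrt pi / 2"
    using gaussian_moment_0 by (auto simp: has_bochner_integral_iff)
  show ?thesis
    using lborel_integrable_real_affine[OF i c, of 0] lborel_integral_real_affine[OF c, of ?phi 0] v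
    unfolding rescale by (simp add: has_bochner_integral_iff)
qed

lemma gaussian_tail_bounds:
  fixes x :: real assumes x: "0 \<le> x"
  shows "0 \<le> 1/2 - integral {0..x} (\<lambda>z. exp (- pi * z\<^sup>2))"
    and "1/2 - integral {0..x} (\<lambda>z. exp (- pi * z\<^sup>2)) \<le> exp (- pi * x\<^sup>2) / 2"
proof -
  let ?h = "\<lambda>z::real. exp (- pi * z\<^sup>2)"
  have I0: "integrable lborel (\<lambda>z::real. indicator {0..} z * ?h z)"
    using has_bochner_integral_half_gaussian by (simp add: has_bochner_integral_iff)
  have I1: "integrable lborel (\<lambda>z::real. indicator {0..x} z * ?h z)"
    by (rule Bochner_Integration.integrable_bound[OF I0]) (auto simp: indicator_def)
  have I2: "integrable lborel (\<lambda>z::real. indicator {x<..} z * ?h z)"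
    by (rule Bochner_Integration.integrable_bound[OF I0]) (use x in \<open>auto simp: indicator_def\<close>)
  define tail where "tail = (\<integral>z. indicator {x<..} z * ?h z \<partial>lborel)"
  have "integral {0..x} ?h = (\<integral>z. indicator {0..x} z * ?h z \<partial>lborel)"
    using set_borel_integral_eq_integral(2)[of "{0..x}" ?h] I1
    by (simp add: set_integrable_def set_lebesgue_integral_def)
  moreover have "(\<lambda>z. indicator {0..} z * ?h z) = (\<lambda>z. indicator {0..x} z * ?h z + indicator {x<..} z * ?h z)"
    using x by (auto simp: indicator_def fun_eq_iff)
  ultimately have split: "1/2 = integral {0..x} ?h + tail"
    using has_bochner_integral_half_gaussian Bochner_Integration.integral_add[OF I1 I2]
    by (simp add: has_bochner_integral_iff tail_def)
  have "0 \<le> tail"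
    unfolding tail_def by (rule Bochner_Integration.integral_nonneg) (simp add: indicator_def)
  then show "0 \<le> 1/2 - integral {0..x} ?h" using split by linarith
  txt \<open>Shifting the tail to the origin, \<open>exp (- pi * (x + s)\<^sup>2) \<le> exp (- pi * x\<^sup>2) * exp (- pi * s\<^sup>2)\<close>.\<close>
  have shift: "tail = (\<integral>s. indicator {x<..} (x + 1 * s) * ?h (x + 1 * s) \<partial>lborel)"
    using lborel_integral_real_affine[of 1 "\<lambda>z. indicator {x<..} z * ?h z" x] by (simp add: tail_def)
  have le: "indicator {x<..} (x + 1 * s) * ?h (x + 1 * s) \<le> exp (- pi * x\<^sup>2) * (indicator {0..} s * ?h s)" for s :: real
  proof (cases "0 < s")
    case True
    have "- pi * (x + s)\<^sup>2 \<le> - pi * x\<^sup>2 + - pi * s\<^sup>2"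
      using x True pi_gt_zero by (simp add: power2_eq_square algebra_simps)
    then show ?thesis using True by (simp add: indicator_def exp_add[symmetric])
  qed (simp add: indicator_def)
  have "tail \<le> (\<integral>s. exp (- pi * x\<^sup>2) * (indicator {0..} s * ?h s) \<partial>lborel)"
    unfolding shift
    by (rule Bochner_Integration.integral_mono[OF lborel_integrable_real_affine[OF I2] _ le])
       (use I0 in simp_all)
  also have "\<dots> = exp (- pi * x\<^sup>2) / 2"
    using has_bochner_integral_half_gaussian by (simp add: has_bochner_integral_iff)
  finally show "1/2 - integral {0..x} ?h \<le> exp (- pi * x\<^sup>2) / 2" using split by linarith
qed

lemma Efun_eq_sgn_integral:
  "Efun x = 2 * sgn x * integral {0..\<bar>x\<bar>} (\<lambda>z. exp (- pi * z\<^sup>2))"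
proof (cases "0 \<le> x")
  case True
  then show ?thesis by (cases "x = 0") (simp_all add: Efun_def)
next
  case False
  have "integral {x..0} (\<lambda>z. exp (- pi * z\<^sup>2)) = integral {0..-x} (\<lambda>z. exp (- pi * (- z)\<^sup>2))"
    using Henstock_Kurzweil_Integration.integral_reflect_real[of 0 x "\<lambda>z. exp (- pi * z\<^sup>2)"] by simp
  then show ?thesis using False by (simp add: Efun_def)
qed

lemma abs_Efun_le_1: "\<bar>Efun x\<bar> \<le> 1"
proof -
  have "0 \<le> integral {0..\<bar>x\<bar>} (\<lambda>z. exp (- pi * z\<^sup>2))"
    by (rule integral_nonneg) (auto intro!: integrable_continuous_interval continuous_intros)
  then show ?thesis
    using gaussian_tail_bounds(1)[of "\<bar>x\<bar>"]
    by (auto simp: Efun_eq_sgn_integral abs_mult sgn_if)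
qed

lemma abs_sgn_minus_Efun_le: "\<bar>sgn x - Efun x\<bar> \<le> exp (- pi * x\<^sup>2)"
proof -
  have "sgn x - Efun x = sgn x * (2 * (1/2 - integral {0..\<bar>x\<bar>} (\<lambda>z. exp (- pi * z\<^sup>2))))"
    by (simp add: Efun_eq_sgn_integral algebra_simps)
  then show ?thesis
    using gaussian_tail_bounds[of "\<bar>x\<bar>"] by (auto simp: abs_mult sgn_if)
qed

lemma summable_on_int_geometric:
  fixes r :: real assumes "0 \<le> r" "r < 1"
  shows "(\<lambda>n::int. r ^ nat \<bar>n\<bar>) summable_on UNIV"
proof -
  have g: "(\<lambda>n::nat. r ^ n) summable_on UNIV"
    by (rule norm_summable_imp_summable_on) (use assms in \<open>simp add: summable_geometric\<close>)
  have "(\<lambda>n::int. r ^ nat \<bar>n\<bar>) summable_on range int"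
    by (subst summable_on_reindex) (use g in \<open>auto simp: o_def\<close>)
  moreover have "(\<lambda>n::int. r ^ nat \<bar>n\<bar>) summable_on range (\<lambda>n. - int n)"
    by (subst summable_on_reindex) (use g in \<open>auto simp: o_def inj_on_def\<close>)
  moreover have "range int \<union> range (\<lambda>n. - int n) = (UNIV :: int set)"
  proof -
    have "n \<in> range int \<union> range (\<lambda>n. - int n)" for n :: int
      by (cases "0 \<le> n") (auto intro: image_eqI[of n int "nat n"] image_eqI[of n _ "nat (- n)"])
    then show ?thesis by blast
  qed
  ultimately show ?thesis by (metis summable_on_union)
qed

definition Rfun_coeff :: "complex \<Rightarrow> complex \<Rightarrow> int \<Rightarrow> real" where
  "Rfun_coeff w \<sigma> n = sgn (real_of_int n + 1/2)
     - Efun ((real_of_int n + 1/2 + Im w / Im \<sigma>) * sqrt (2 * Im \<sigma>))"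

definition Rfun_phase :: "complex \<Rightarrow> complex \<Rightarrow> int \<Rightarrow> complex" where
  "Rfun_phase w \<sigma> n = (-1) powi n
     * exp (- 2 * pi * \<i> * of_real (real_of_int n + 1/2) * w)
     * exp (- pi * \<i> * of_real ((real_of_int n + 1/2)\<^sup>2) * \<sigma>)"

definition Rfun_term :: "complex \<Rightarrow> complex \<Rightarrow> int \<Rightarrow> complex" where
  "Rfun_term w \<sigma> n = of_real (Rfun_coeff w \<sigma> n) * Rfun_phase w \<sigma> n"

lemma Rfun_eq_infsum: "Rfun w \<sigma> = (\<Sum>\<^sub>\<infinity>n. Rfun_term w \<sigma> n)"
  unfolding Rfun_def Rfun_term_def Rfun_coeff_def Rfun_phase_def Let_def by (simp only: mult.assoc)

lemma abs_sgn_minus_Efun_shift_le: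
  fixes t \<nu> a :: real assumes t: "0 < t"
  shows "\<bar>sgn \<nu> - Efun ((\<nu> + a) * sqrt (2 * t))\<bar> \<le> 2 * exp (2 * pi * t * (a\<^sup>2 - (\<nu> + a)\<^sup>2))"
proof (cases "sgn (\<nu> + a) = sgn \<nu>")
  case True
  let ?X = "(\<nu> + a) * sqrt (2 * t)"
  have "sgn ?X = sgn \<nu>" "?X\<^sup>2 = 2 * t * (\<nu> + a)\<^sup>2"
    using True t by (simp_all add: sgn_mult power_mult_distrib)
  then have "\<bar>sgn \<nu> - Efun ?X\<bar> \<le> exp (2 * pi * t * (0 - (\<nu> + a)\<^sup>2))"
    using abs_sgn_minus_Efun_le[of ?X] by (simp add: algebra_simps)
  also have "\<dots> \<le> exp (2 * pi * t * (a\<^sup>2 - (\<nu> + a)\<^sup>2))"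
    using t by (simp add: right_diff_distrib)
  also have "\<dots> \<le> 2 * exp (2 * pi * t * (a\<^sup>2 - (\<nu> + a)\<^sup>2))"
    by simp
  finally show ?thesis .
next
  case False
  then have "\<bar>\<nu> + a\<bar> \<le> \<bar>a\<bar>"
    by (cases "\<nu> > 0"; cases "\<nu> < 0"; cases "\<nu> + a > 0"; cases "\<nu> + a < 0") auto
  then have "(\<nu> + a)\<^sup>2 \<le> a\<^sup>2" by (metis abs_ge_zero power2_abs power_mono)
  then have "1 \<le> exp (2 * pi * t * (a\<^sup>2 - (\<nu> + a)\<^sup>2))"
    using t pi_gt_zero by simp
  moreover have "\<bar>sgn \<nu> - Efun ((\<nu> + a) * sqrt (2 * t))\<bar> \<le> 2"
    using abs_Efun_le_1 by (smt (verit) sgn_if)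
  ultimately show ?thesis by linarith
qed

lemma norm_Rfun_term_le:
  fixes w \<sigma> :: complex and n :: int
  defines "t \<equiv> Im \<sigma>" and "a \<equiv> Im w / Im \<sigma>"
  assumes t: "0 < t"
  shows "norm (Rfun_term w \<sigma> n) \<le> 2 * exp (pi * t * (a\<^sup>2 - (real_of_int n + 1/2 + a)\<^sup>2))"
proof -
  define \<nu> where "\<nu> = real_of_int n + 1/2"
  have "norm (Rfun_term w \<sigma> n)
      = \<bar>sgn \<nu> - Efun ((\<nu> + a) * sqrt (2 * t))\<bar> * exp (2 * pi * \<nu> * Im w) * exp (pi * \<nu>\<^sup>2 * t)"
    unfolding Rfun_term_def norm_mult norm_of_real Rfun_phase_def
    by (simp add: Rfun_coeff_def norm_power_int norm_exp_eq_Re t_def a_def \<nu>_def)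
  also have "\<dots> \<le> 2 * exp (2 * pi * t * (a\<^sup>2 - (\<nu> + a)\<^sup>2)) * exp (2 * pi * \<nu> * Im w) * exp (pi * \<nu>\<^sup>2 * t)"
    using abs_sgn_minus_Efun_shift_le[OF t] by (simp add: mult_right_mono)
  also have "\<dots> = 2 * exp (pi * t * (a\<^sup>2 - (\<nu> + a)\<^sup>2))"
  proof -
    have "Im w = a * t" using t by (simp add: a_def t_def)
    then show ?thesis
      by (simp add: mult.assoc exp_add[symmetric] power2_eq_square algebra_simps)
  qed
  finally show ?thesis by (simp add: \<nu>_def)
qed

lemma gaussian_le_geometric:
  fixes t b :: real assumes t: "0 < t"
  shows "exp (- pi * t * (real_of_int n + b)\<^sup>2) \<le> exp (pi * t * (1 + 2 * \<bar>b\<bar>)) * exp (- 2 * pi * t) ^ nat \<bar>n\<bar>"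
proof -
  let ?y = "real_of_int n + b"
  have "- (?y\<^sup>2) \<le> 1 - 2 * \<bar>?y\<bar>"
    using power2_abs[of ?y] power2_diff[of "\<bar>?y\<bar>" 1] zero_le_power2[of "\<bar>?y\<bar> - 1"] by simp
  also have "\<dots> \<le> 1 + 2 * \<bar>b\<bar> - 2 * \<bar>real_of_int n\<bar>"
    using abs_triangle_ineq[of ?y "- b"] by simp
  finally have "pi * t * (- (?y\<^sup>2)) \<le> pi * t * (1 + 2 * \<bar>b\<bar> - 2 * \<bar>real_of_int n\<bar>)"
    using t by (intro mult_left_mono) auto
  then have "exp (- pi * t * ?y\<^sup>2) \<le> exp (pi * t * (1 + 2 * \<bar>b\<bar>) + real (nat \<bar>n\<bar>) * (- 2 * pi * t))"
    by (simp add: algebra_simps)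
  also have "\<dots> = exp (pi * t * (1 + 2 * \<bar>b\<bar>)) * exp (- 2 * pi * t) ^ nat \<bar>n\<bar>"
    by (simp only: exp_add exp_of_nat_mult)
  finally show ?thesis .
qed

lemma summable_on_Rfun_term:
  assumes "0 < Im \<sigma>"
  shows "Rfun_term w \<sigma> summable_on UNIV"
proof -
  define t where "t = Im \<sigma>"
  define a where "a = Im w / Im \<sigma>"
  have t: "0 < t" using assms t_def by simp
  define C where "C = 2 * exp (pi * t * a\<^sup>2) * exp (pi * t * (1 + 2 * \<bar>1/2 + a\<bar>))"
  have "(\<lambda>n::int. C * exp (- 2 * pi * t) ^ nat \<bar>n\<bar>) summable_on UNIV"
    using t by (intro summable_on_cmult_right summable_on_int_geometric) auto
  moreover have "norm (Rfun_term w \<sigma> n) \<le> C * exp (- 2 * pi * t) ^ nat \<bar>n\<bar>" for n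
  proof -
    have "norm (Rfun_term w \<sigma> n) \<le> 2 * exp (pi * t * a\<^sup>2) * exp (- pi * t * (real_of_int n + (1/2 + a))\<^sup>2)"
    proof -
      have "exp (pi * t * (a\<^sup>2 - (real_of_int n + 1/2 + a)\<^sup>2))
          = exp (pi * t * a\<^sup>2) * exp (- pi * t * (real_of_int n + (1/2 + a))\<^sup>2)"
        by (simp add: exp_add[symmetric] algebra_simps)
      then show ?thesis
        using norm_Rfun_term_le[of \<sigma> w n] t by (simp add: t_def a_def mult.assoc)
    qed
    also have "\<dots> \<le> C * exp (- 2 * pi * t) ^ nat \<bar>n\<bar>"
      using gaussian_le_geometric[OF t, of n "1/2 + a"] by (simp add: C_def mult.assoc)
    finally show ?thesis .
  qed
  ultimately have "(\<lambda>n. norm (Rfun_term w \<sigma> n)) summable_on UNIV"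
    by (rule summable_on_comparison_test) simp
  then show ?thesis by (simp add: summable_on_iff_abs_summable_on_complex)
qed

lemma infsum_int_residue_classes:
  fixes g :: "int \<Rightarrow> 'a::banach"
  assumes g: "g summable_on UNIV" and N: "0 < N"
  shows "(\<Sum>\<^sub>\<infinity>n. g n) = (\<Sum>k<N. \<Sum>\<^sub>\<infinity>m. g (int N * m + int k))"
proof -
  define A where "A = Sigma {..<N} (\<lambda>_. UNIV :: int set)"
  have bij: "bij_betw (\<lambda>(k, m). int N * m + int k) A UNIV"
    by (rule bij_betwI[where g = "\<lambda>n. (nat (n mod int N), n div int N)"])
       (use N in \<open>auto simp: A_def nat_less_iff\<close>)
  have "(\<lambda>(k, m). g (int N * m + int k)) summable_on A"
    using summable_on_reindex_bij_betw[OF bij, of g] g by (simp add: case_prod_unfold)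
  then have "(\<Sum>k<N. \<Sum>\<^sub>\<infinity>m. g (int N * m + int k)) = (\<Sum>\<^sub>\<infinity>(k, m)\<in>A. g (int N * m + int k))"
    unfolding A_def by (simp add: infsum_Sigma'_banach[symmetric])
  also have "\<dots> = (\<Sum>\<^sub>\<infinity>n. g n)"
    using infsum_reindex_bij_betw[OF bij, of g] by (simp add: case_prod_unfold)
  finally show ?thesis ..
qed

lemma sgn_of_int_plus_half: "sgn (real_of_int j + 1/2) = (if 0 \<le> j then 1 else - 1)"
proof (cases "0 \<le> j")
  case True
  then have "0 < real_of_int j + 1/2" by linarith
  then show ?thesis using True by simp
next
  case False
  then have "real_of_int j + 1/2 < 0" by linarith
  then show ?thesis using False by simp
qed

lemma Rfun_coeff_dissection:
  fixes N k :: nat and m :: int and u \<tau> :: complex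
  assumes N: "0 < N" and k: "k < N" and \<tau>: "0 < Im \<tau>"
  shows "Rfun_coeff (of_nat N * u + of_nat k * \<tau> - (of_nat N - 1) / 2 * \<tau> + (of_nat N + 1) / 2) (of_nat N * \<tau>) m
       = Rfun_coeff u (\<tau> / of_nat N) (int N * m + int k)"
proof -
  define n where "n = int N * m + int k"
  define T where "T = Im \<tau>"
  have T: "0 < T" and Np: "0 < real N" using \<tau> N by (simp_all add: T_def)
  have "0 \<le> n \<longleftrightarrow> 0 \<le> m"
  proof
    assume "0 \<le> n"
    show "0 \<le> m"
    proof (rule ccontr)
      assume "\<not> 0 \<le> m"
      then have "int N * m \<le> int N * (- 1)" by (intro mult_left_mono) auto
      then show False using \<open>0 \<le> n\<close> k by (simp add: n_def)
    qed
  qed (simp add: n_def)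
  then have sgn_eq: "sgn (real_of_int m + 1/2) = sgn (real_of_int n + 1/2)"
    by (simp add: sgn_of_int_plus_half)
  have sqrt_eq: "sqrt (2 * (real N * T)) = real N * sqrt (2 * (T / real N))"
  proof -
    have "real N = sqrt (real N) * sqrt (real N)" by simp
    then show ?thesis using Np by (simp add: real_sqrt_mult real_sqrt_divide field_simps)
  qed
  have Im_w: "Im (of_nat N * u + of_nat k * \<tau> - (of_nat N - 1) / 2 * \<tau> + (of_nat N + 1) / 2)
      = real N * Im u + real k * T - (real N - 1) / 2 * T"
    by (simp add: T_def)
  have "(real_of_int m + 1/2 + (real N * Im u + real k * T - (real N - 1) / 2 * T) / (real N * T)) * real N
      = real_of_int n + 1/2 + Im u / (T / real N)"
    using Np T by (simp add: n_def field_simps)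
  then have arg_eq: "(real_of_int m + 1/2 + (real N * Im u + real k * T - (real N - 1) / 2 * T) / (real N * T))
        * sqrt (2 * (real N * T))
      = (real_of_int n + 1/2 + Im u / (T / real N)) * sqrt (2 * (T / real N))"
    unfolding sqrt_eq by (metis mult.assoc)
  have Im_scaled: "Im (of_nat N * \<tau>) = real N * T" "Im (\<tau> / of_nat N) = T / real N"
    by (simp_all add: T_def)
  show ?thesis
    unfolding Rfun_coeff_def n_def[symmetric] Im_w Im_scaled sgn_eq arg_eq ..
qed

lemma Rfun_phase_dissection:
  fixes N k :: nat and m :: int and u \<tau> :: complex
  assumes N: "0 < N"
  shows "(-1) ^ k * exp (- 2 * pi * \<i> * of_nat k * u)
           * qpow \<tau> (- (real k * (real k - real N + 1)) / (2 * real N))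
           * Rfun_phase (of_nat N * u + of_nat k * \<tau> - (of_nat N - 1) / 2 * \<tau> + (of_nat N + 1) / 2)
               (of_nat N * \<tau>) m
       = (- \<i>) ^ (N + 1) * exp (- pi * \<i> * (of_nat N - 1) * u)
           * qpow \<tau> ((real N - 1)\<^sup>2 / (8 * real N)) * Rfun_phase u (\<tau> / of_nat N) (int N * m + int k)"
proof -
  have "- \<i> = cis (- pi / 2)" by (simp add: complex_eq_iff)
  then have minus_i: "- \<i> = exp (\<i> * of_real (- pi / 2))" by (simp add: cis_conv_exp)
  have powi: "(-1::complex) powi j = exp (of_int j * (pi * \<i>))" for j :: int
    using exp_power_int[of "pi * \<i>" j] by simp
  have pow: "(-1::complex) ^ j = exp (of_nat j * (pi * \<i>))" for j :: nat
    by (simp add: exp_of_nat_mult)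
  have "of_nat N \<noteq> (0::complex)" using N by simp
  then show ?thesis
    unfolding Rfun_phase_def qpow_def minus_i powi pow exp_of_nat_mult[symmetric] exp_add[symmetric] exp_eq
    by (intro exI[of _ "- (int N * m)"]) (simp add: field_simps power2_eq_square)
qed

lemma Rfun_term_dissection:
  fixes N k :: nat and m :: int and u \<tau> :: complex
  assumes N: "0 < N" and k: "k < N" and \<tau>: "0 < Im \<tau>"
  shows "(-1) ^ k * exp (- 2 * pi * \<i> * of_nat k * u)
           * qpow \<tau> (- (real k * (real k - real N + 1)) / (2 * real N))
           * Rfun_term (of_nat N * u + of_nat k * \<tau> - (of_nat N - 1) / 2 * \<tau> + (of_nat N + 1) / 2)
               (of_nat N * \<tau>) m
       = (- \<i>) ^ (N + 1) * exp (- pi * \<i> * (of_nat N - 1) * u)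
           * qpow \<tau> ((real N - 1)\<^sup>2 / (8 * real N)) * Rfun_term u (\<tau> / of_nat N) (int N * m + int k)"
  using arg_cong[OF Rfun_phase_dissection[OF N, of k u \<tau> m],
      of "\<lambda>z. of_real (Rfun_coeff u (\<tau> / of_nat N) (int N * m + int k)) * z"]
  unfolding Rfun_term_def Rfun_coeff_dissection[OF N k \<tau>] by (simp only: mult_ac)

theorem lemma3p5:
  fixes N :: nat and u \<tau> :: complex
  assumes "N \<ge> 1" and "Im \<tau> > 0"
  shows "(- \<i>) ^ (N + 1) * exp (- pi * \<i> * (of_nat N - 1) * u)
           * qpow \<tau> ((real N - 1)\<^sup>2 / (8 * real N)) * Rfun u (\<tau> / of_nat N)
         = (\<Sum>k = 0..N - 1. (-1) ^ k * exp (- 2 * pi * \<i> * of_nat k * u)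
              * qpow \<tau> (- (real k * (real k - real N + 1)) / (2 * real N))
              * Rfun (of_nat N * u + of_nat k * \<tau> - (of_nat N - 1) / 2 * \<tau> + (of_nat N + 1) / 2)
                     (of_nat N * \<tau>))"
proof -
  have N: "0 < N" using assms(1) by simp
  define P where "P = (- \<i>) ^ (N + 1) * exp (- pi * \<i> * (of_nat N - 1) * u)
    * qpow \<tau> ((real N - 1)\<^sup>2 / (8 * real N))"
  define c where "c k = (-1) ^ k * exp (- 2 * pi * \<i> * of_nat k * u)
    * qpow \<tau> (- (real k * (real k - real N + 1)) / (2 * real N))" for k :: nat
  define w where "w k = of_nat N * u + of_nat k * \<tau> - (of_nat N - 1) / 2 * \<tau> + (of_nat N + 1) / 2" for k :: nat
  have "P * Rfun u (\<tau> / of_nat N) = (\<Sum>\<^sub>\<infinity>n. P * Rfun_term u (\<tau> / of_nat N) n)"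
    by (simp add: Rfun_eq_infsum infsum_cmult_right')
  also have "\<dots> = (\<Sum>k<N. \<Sum>\<^sub>\<infinity>m. P * Rfun_term u (\<tau> / of_nat N) (int N * m + int k))"
    using N assms(2) by (intro infsum_int_residue_classes summable_on_cmult_right summable_on_Rfun_term) simp_all
  also have "\<dots> = (\<Sum>k<N. c k * Rfun (w k) (of_nat N * \<tau>))"
  proof (rule sum.cong)
    fix k assume "k \<in> {..<N}"
    then have "P * Rfun_term u (\<tau> / of_nat N) (int N * m + int k) = c k * Rfun_term (w k) (of_nat N * \<tau>) m" for m
      unfolding P_def c_def w_def by (intro Rfun_term_dissection[symmetric] N assms(2)) simp
    then show "(\<Sum>\<^sub>\<infinity>m. P * Rfun_term u (\<tau> / of_nat N) (int N * m + int k)) = c k * Rfun (w k) (of_nat N * \<tau>)"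
      by (simp add: Rfun_eq_infsum infsum_cmult_right')
  qed simp
  also have "{..<N} = {0..N - 1}" using N by auto
  finally show ?thesis unfolding P_def c_def w_def .
qed

end
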